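(* Assume that $A_{m,m_1;m'}=\gamma_m\gamma_{m_1}$ for all $m,m_1\ge1$ and $m'\in\{1,\dots,m+m_1-1\}$, where $(\gamma_m)_{m\ge1}$ is a sequence with $\gamma_m\in(0,\infty)$. Then for every sequence $f=(f_m)_{m\ge1}$ of positive functions (with sufficient smoothness and decay for all expressions to make sense), $$\sum_{m\ge1}\int_{\mathbb{R}^n}Q_m(f)\,\log\Big(\frac{\gamma_m f_m}{m^{n/2}}\Big)\,dv\le0.$$
   Context: Let $n\ge1$. Given masses $m,m_1\ge1$, $m'\in\{1,\dots,m+m_1-1\}$, $m'_1:=m+m_1-m'$, $v,v_1\in\mathbb{R}^n$, $\Omega\in\mathbb{S}^{n-1}$ with $\Omega\cdot(v-v_1)\le0$, the collision rule is $v'=\frac{mv+m_1v_1}{m+m_1}+\frac{(mm_1)^{1/2}}{m+m_1}\big(\frac{m'_1}{m'}\big)^{1/2}\big[v-v_1-2((v-v_1)\cdot\Omega)\Omega\big]$, $v'_1=\frac{mv+m_1v_1}{m+m_1}-\frac{(mm_1)^{1/2}}{m+m_1}\big(\frac{m'}{m'_1}\big)^{1/2}\big[v-v_1-2((v-v_1)\cdot\Omega)\Omega\big]$. Let $\mathbf B\ge0$ on $[0,\infty)\times[-1,1]$ and $B_{m,m_1}(v,v_1,\Omega):=\mathbf B\big(\frac{mm_1}{m+m_1}|v-v_1|^2,\Omega\cdot\frac{v-v_1}{|v-v_1|}\big)$. The BME operator $Q(f)=(Q_m(f))_{m\ge1}$ with rates $A_{m,m_1;m'}\ge0$ is defined by: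 for every test sequence $\varphi$, $$\sum_{m\ge1}\int Q_m(f)\varphi_m\,dv=\frac12\sum_{m,m_1\ge1}\sum_{m'=1}^{m+m_1-1}A_{m,m_1;m'}\int_{\{(v-v_1)\cdot\Omega\le0\}}B_{m,m_1}(v,v_1,\Omega)\big(\varphi_{m'}(v')+\varphi_{m'_1}(v'_1)-\varphi_m(v)-\varphi_{m_1}(v_1)\big)f_m(v)f_{m_1}(v_1)\,dv\,dv_1\,d\Omega.$$ *)

theory Defs
  imports "HOL-Analysis.Analysis"
begin

text \<open>Velocities live in an abstract Euclidean space 'a (i.e. R^n with n = DIM('a)).\<close>

text \<open>Surface measure on the unit sphere S^{n-1}, defined as the cone measure:
  sigma(E) = n * Lebesgue measure of {t w. w in E, 0 < t <= 1}.\<close>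
definition sphere_measure :: "'a::euclidean_space measure" where
  "sphere_measure = scale_measure (of_nat DIM('a))
     (distr (restrict_space lborel (ball 0 1)) borel (\<lambda>x. x /\<^sub>R norm x))"

text \<open>Post-collisional velocities v' and v'_1 (the outgoing masses are m' and
  m'_1 = m + m_1 - m').\<close>
definition post_v :: "nat \<Rightarrow> nat \<Rightarrow> nat \<Rightarrow> 'a::euclidean_space \<Rightarrow> 'a \<Rightarrow> 'a \<Rightarrow> 'a" where
  "post_v m m1 m' v v1 \<Omega> =
     (1 / real (m + m1)) *\<^sub>R (real m *\<^sub>R v + real m1 *\<^sub>R v1)
     + (sqrt (real m * real m1) / real (m + m1) * sqrt (real (m + m1 - m') / real m'))
       *\<^sub>R (v - v1 - (2 * ((v - v1) \<bullet> \<Omega>)) *\<^sub>R \<Omega>)"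

definition post_v1 :: "nat \<Rightarrow> nat \<Rightarrow> nat \<Rightarrow> 'a::euclidean_space \<Rightarrow> 'a \<Rightarrow> 'a \<Rightarrow> 'a" where
  "post_v1 m m1 m' v v1 \<Omega> =
     (1 / real (m + m1)) *\<^sub>R (real m *\<^sub>R v + real m1 *\<^sub>R v1)
     - (sqrt (real m * real m1) / real (m + m1) * sqrt (real m' / real (m + m1 - m')))
       *\<^sub>R (v - v1 - (2 * ((v - v1) \<bullet> \<Omega>)) *\<^sub>R \<Omega>)"

definition coll_kernel ::
  "(real \<Rightarrow> real \<Rightarrow> real) \<Rightarrow> nat \<Rightarrow> nat \<Rightarrow> 'a::euclidean_space \<Rightarrow> 'a \<Rightarrow> 'a \<Rightarrow> real" where
  "coll_kernel BB m m1 v v1 \<Omega> =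
     BB (real m * real m1 / real (m + m1) * (norm (v - v1))\<^sup>2)
        (\<Omega> \<bullet> ((v - v1) /\<^sub>R norm (v - v1)))"

definition coll_space :: "(('a::euclidean_space \<times> 'a) \<times> 'a) measure" where
  "coll_space = (lborel \<Otimes>\<^sub>M lborel) \<Otimes>\<^sub>M sphere_measure"

definition coll_indices :: "(nat \<times> nat \<times> nat) set" where
  "coll_indices = {(m, m1, m'). 1 \<le> m \<and> 1 \<le> m1 \<and> 1 \<le> m' \<and> m' \<le> m + m1 - 1}"

definition coll_weight ::
  "(real \<Rightarrow> real \<Rightarrow> real) \<Rightarrow> (nat \<Rightarrow> 'a::euclidean_space \<Rightarrow> real) \<Rightarrow> nat \<Rightarrow> nat
     \<Rightarrow> ('a \<times> 'a) \<times> 'a \<Rightarrow> real" where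
  "coll_weight BB f m m1 x =
     (case x of ((v, v1), \<Omega>) \<Rightarrow>
        (if (v - v1) \<bullet> \<Omega> \<le> 0 then 1 else 0) * coll_kernel BB m m1 v v1 \<Omega> * f m v * f m1 v1)"

definition coll_term ::
  "nat \<Rightarrow> (real \<Rightarrow> real \<Rightarrow> real) \<Rightarrow> (nat \<Rightarrow> 'a::euclidean_space \<Rightarrow> real) \<Rightarrow> (nat \<Rightarrow> 'a \<Rightarrow> real)
     \<Rightarrow> nat \<times> nat \<times> nat \<Rightarrow> ('a \<times> 'a) \<times> 'a \<Rightarrow> real" where
  "coll_term i BB f \<phi> k x =
     (case k of (m, m1, m') \<Rightarrow> case x of ((v, v1), \<Omega>) \<Rightarrow>
        coll_weight BB f m m1 x *
        (if i = 0 then \<phi> m' (post_v m m1 m' v v1 \<Omega>)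
         else if i = 1 then \<phi> (m + m1 - m') (post_v1 m m1 m' v v1 \<Omega>)
         else if i = 2 then \<phi> m v
         else \<phi> m1 v1))"

definition coll_integrand ::
  "(real \<Rightarrow> real \<Rightarrow> real) \<Rightarrow> (nat \<Rightarrow> 'a::euclidean_space \<Rightarrow> real) \<Rightarrow> (nat \<Rightarrow> 'a \<Rightarrow> real)
     \<Rightarrow> nat \<times> nat \<times> nat \<Rightarrow> ('a \<times> 'a) \<times> 'a \<Rightarrow> real" where
  "coll_integrand BB f \<phi> k x =
     coll_term 0 BB f \<phi> k x + coll_term 1 BB f \<phi> k x - coll_term 2 BB f \<phi> k x - coll_term 3 BB f \<phi> k x"

text \<open>The pairing  sum_m int Q_m(f) phi_m dv,  which by definition of the BME operator
  (weak form) equals the right-hand side below.\<close>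
definition BME_pairing ::
  "(nat \<Rightarrow> nat \<Rightarrow> nat \<Rightarrow> real) \<Rightarrow> (real \<Rightarrow> real \<Rightarrow> real) \<Rightarrow> (nat \<Rightarrow> 'a::euclidean_space \<Rightarrow> real)
     \<Rightarrow> (nat \<Rightarrow> 'a \<Rightarrow> real) \<Rightarrow> real" where
  "BME_pairing A BB f \<phi> =
     1 / 2 * (\<Sum>\<^sub>\<infinity>k\<in>coll_indices.
        (case k of (m, m1, m') \<Rightarrow> A m m1 m') * integral\<^sup>L coll_space (coll_integrand BB f \<phi> k))"

definition entropy_test :: "(nat \<Rightarrow> real) \<Rightarrow> (nat \<Rightarrow> 'a::euclidean_space \<Rightarrow> real) \<Rightarrow> nat \<Rightarrow> 'a \<Rightarrow> real" where
  "entropy_test \<gamma> f m v = ln (\<gamma> m * f m v / real m powr (real DIM('a) / 2))"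

end

(*
  For fixed Omega, the collision map (v, v1) |-> (v', v1') is linear: a shear to the relative
  velocity v - v1 and the centre-of-mass velocity, a reflection of the relative velocity in the
  plane orthogonal to Omega dilated by c = sqrt (m m1 / (m' m'1)), and a shear back with the
  outgoing masses.  Hence T (v, v1, Omega) = (v', v1', -Omega) multiplies the collision measure
  by c^-n.  T maps the channel (m, m1, m') to the reverse channel (m', m'1, m), undoes itself
  there, and preserves the collision kernel and the sign of (v - v1).Omega.  Substituting T in
  the contribution of the reverse channel and writing gamma_m f_m = m^(n/2) G_m, with log G_m
  the test function, the two contributions combine pointwise to
    rate * (m m1)^(n/2) * (G_m G_m1 - G_m' G_m'1) * (log (G_m' G_m'1) - log (G_m G_m1)) <= 0,
  where rate >= 0 is the kernel times the sign indicator; the powers of the masses match because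
  c^n (m' m'1)^(n/2) = (m m1)^(n/2).  Summing over all channels, reindexed by the involution
  (m, m1, m') |-> (m', m'1, m), gives the claim.
*)

theory Submission
  imports Defs
begin

section \<open>Orthogonal maps preserve Lebesgue measure\<close>

text \<open>The library proves invariance of Lebesgue measure under orthogonal maps only on
  real ^ 'n with 'n::{finite,wellorder}.  The finite type 'a basis_index, a copy of the basis of
  'a, identifies 'a with such a space.\<close>

typedef (overloaded) ('a::euclidean_space) basis_index = "Basis :: 'a set"
  using nonempty_Basis by blast

lemma range_Rep_basis_index: "range Rep_basis_index = Basis"
  by (rule type_definition.Rep_range[OF type_definition_basis_index])

lemma inj_Rep_basis_index: "inj Rep_basis_index"
  by (rule injI) (simp add: Rep_basis_index_inject)

instance basis_index :: (euclidean_space) finite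
proof
  show "finite (UNIV :: 'a basis_index set)"
    by (rule finite_imageD[of Rep_basis_index]) (simp_all add: range_Rep_basis_index inj_Rep_basis_index)
qed

definition basis_rank :: "'a::euclidean_space basis_index \<Rightarrow> nat" where
  "basis_rank i = to_nat_on (Basis :: 'a set) (Rep_basis_index i)"

lemma inj_basis_rank: "inj basis_rank"
  unfolding basis_rank_def[abs_def]
  by (rule comp_inj_on[OF inj_Rep_basis_index, unfolded o_def])
     (simp add: range_Rep_basis_index inj_on_to_nat_on countable_finite)

instantiation basis_index :: (euclidean_space) linorder
begin

definition less_eq_basis_index :: "'a basis_index \<Rightarrow> 'a basis_index \<Rightarrow> bool"
  where "less_eq_basis_index i j \<longleftrightarrow> basis_rank i \<le> basis_rank j"

definition less_basis_index :: "'a basis_index \<Rightarrow> 'a basis_index \<Rightarrow> bool"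
  where "less_basis_index i j \<longleftrightarrow> basis_rank i < basis_rank j"

instance
  by standard
    (use inj_basis_rank in \<open>auto simp: less_eq_basis_index_def less_basis_index_def inj_eq dest: injD\<close>)

end

instance basis_index :: (euclidean_space) wellorder
proof
  fix P :: "'a basis_index \<Rightarrow> bool" and i
  assume step: "\<And>i. (\<And>j. j < i \<Longrightarrow> P j) \<Longrightarrow> P i"
  have "\<forall>i. basis_rank i = n \<longrightarrow> P i" for n
  proof (induction n rule: less_induct)
    case (less n)
    then show ?case
      using step by (auto simp: less_basis_index_def)
  qed
  then show "P i"
    by blast
qed


definition to_cart :: "'a::euclidean_space \<Rightarrow> real ^ 'a basis_index" where
  "to_cart x = (\<chi> i. x \<bullet> Rep_basis_index i)"

definition from_cart :: "real ^ 'a basis_index \<Rightarrow> 'a::euclidean_space" where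
  "from_cart y = (\<Sum>i\<in>UNIV. (y $ i) *\<^sub>R Rep_basis_index i)"

lemma bij_betw_Rep_basis_index: "bij_betw Rep_basis_index UNIV Basis"
  by (simp add: bij_betw_def inj_on_def Rep_basis_index_inject range_Rep_basis_index)

lemma sum_Basis_basis_index:
  "(\<Sum>b\<in>Basis. g b) = (\<Sum>i\<in>UNIV. g (Rep_basis_index i))"
  by (rule sum.reindex_bij_betw[OF bij_betw_Rep_basis_index, symmetric])

lemma inner_Rep_basis_index:
  "Rep_basis_index i \<bullet> Rep_basis_index j = (if i = j then 1 else 0)"
  using Rep_basis_index[of i] Rep_basis_index[of j] Rep_basis_index_inject[of i j]
  by (auto simp: inner_Basis)

lemma from_to_cart [simp]: "from_cart (to_cart x) = x"
  using sum_Basis_basis_index[of "\<lambda>b. (x \<bullet> b) *\<^sub>R b"]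
  by (simp add: from_cart_def to_cart_def euclidean_representation)

lemma inner_from_cart: "from_cart y \<bullet> Rep_basis_index j = y $ j"
proof -
  have "from_cart y \<bullet> Rep_basis_index j = (\<Sum>i\<in>UNIV. y $ i * (Rep_basis_index i \<bullet> Rep_basis_index j))"
    by (simp add: from_cart_def inner_sum_left)
  also have "\<dots> = (\<Sum>i\<in>UNIV. if i = j then y $ i else 0)"
    by (intro sum.cong) (auto simp: inner_Rep_basis_index)
  also have "\<dots> = y $ j"
    by simp
  finally show ?thesis .
qed

lemma to_from_cart [simp]: "to_cart (from_cart y) = y"
  by (simp add: to_cart_def vec_eq_iff inner_from_cart)

lemma inner_to_cart: "to_cart x \<bullet> to_cart y = x \<bullet> y"
proof -
  have "to_cart x \<bullet> to_cart y = (\<Sum>i\<in>UNIV. (x \<bullet> Rep_basis_index i) * (y \<bullet> Rep_basis_index i))"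
    by (simp add: to_cart_def inner_vec_def)
  also have "\<dots> = x \<bullet> y"
    by (simp add: euclidean_inner[of x y] sum_Basis_basis_index)
  finally show ?thesis .
qed

lemma linear_to_cart: "linear to_cart"
  by (rule linearI) (simp_all add: to_cart_def vec_eq_iff inner_add_left)

lemma linear_from_cart: "linear from_cart"
  by (rule linearI) (simp_all add: from_cart_def scaleR_add_left sum.distrib scaleR_sum_right)

lemma borel_measurable_linear:
  fixes g :: "'a::euclidean_space \<Rightarrow> 'b::euclidean_space"
  shows "linear g \<Longrightarrow> g \<in> borel_measurable borel"
  by (intro borel_measurable_continuous_onI linear_continuous_on linear_conv_bounded_linear[THEN iffD1])

lemma to_cart_measurable [measurable]: "to_cart \<in> borel_measurable borel"
  by (rule borel_measurable_linear[OF linear_to_cart])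

lemma from_cart_measurable [measurable]: "from_cart \<in> borel_measurable borel"
  by (rule borel_measurable_linear[OF linear_from_cart])

lemma prod_Basis_vec:
  "(\<Prod>b\<in>(Basis :: (real ^ 'n) set). g b) = (\<Prod>i\<in>UNIV. g (axis i 1))"
proof -
  have Basis_eq: "(Basis :: (real ^ 'n) set) = range (\<lambda>i. axis i 1)"
    by (simp add: Basis_vec_def) blast
  have "inj (\<lambda>i::'n. axis i (1::real))"
    by (rule injI) (simp add: axis_eq_axis)
  then show ?thesis
    unfolding Basis_eq by (simp add: prod.reindex)
qed

lemma lborel_distr_to_cart: "distr lborel borel (to_cart :: 'a::euclidean_space \<Rightarrow> _) = lborel"
proof (rule lborel_eqI[symmetric])
  fix l u :: "real ^ 'a basis_index"
  assume lu: "\<And>b. b \<in> Basis \<Longrightarrow> l \<bullet> b \<le> u \<bullet> b"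
  have le: "l $ i \<le> u $ i" for i
    using lu[of "axis i 1"] by (simp add: inner_axis)
  have "x \<in> to_cart -` box l u \<longleftrightarrow> x \<in> box (from_cart l) (from_cart u)" for x :: 'a
  proof -
    have "x \<in> box (from_cart l) (from_cart u) \<longleftrightarrow>
        (\<forall>i. from_cart l \<bullet> Rep_basis_index i < x \<bullet> Rep_basis_index i
           \<and> x \<bullet> Rep_basis_index i < from_cart u \<bullet> Rep_basis_index i)"
      unfolding mem_box range_Rep_basis_index[symmetric] by simp
    then show ?thesis by (simp add: mem_box_cart to_cart_def inner_from_cart)
  qed
  then have "to_cart -` box l u = box (from_cart l) (from_cart u :: 'a)"
    by blast
  then have "emeasure (distr lborel borel (to_cart :: 'a \<Rightarrow> _)) (box l u)
      = emeasure lborel (box (from_cart l) (from_cart u :: 'a))"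
    by (simp add: emeasure_distr)
  also have "\<dots> = (\<Prod>b\<in>Basis. (from_cart u - from_cart l :: 'a) \<bullet> b)"
  proof (rule emeasure_lborel_box)
    fix b :: 'a
    assume "b \<in> Basis"
    then obtain i where "b = Rep_basis_index i"
      by (metis imageE range_Rep_basis_index)
    then show "from_cart l \<bullet> b \<le> from_cart u \<bullet> b"
      by (simp add: inner_from_cart le)
  qed
  also have "\<dots> = (\<Prod>i\<in>UNIV. u $ i - l $ i)"
    using prod.reindex_bij_betw[OF bij_betw_Rep_basis_index, of "\<lambda>b. (from_cart u - from_cart l :: 'a) \<bullet> b"]
    by (simp add: inner_diff_left inner_from_cart)
  also have "\<dots> = (\<Prod>b\<in>Basis. (u - l) \<bullet> b)"
    by (simp add: prod_Basis_vec inner_axis)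
  finally show "emeasure (distr lborel borel (to_cart :: 'a \<Rightarrow> _)) (box l u) = (\<Prod>b\<in>Basis. (u - l) \<bullet> b)" .
qed simp

lemma lborel_distr_orthogonal_cart:
  fixes g :: "real ^ 'n::{finite,wellorder} \<Rightarrow> real ^ 'n::_"
  assumes g: "orthogonal_transformation g"
  shows "distr lborel borel g = lborel"
proof (rule lborel_eqI[symmetric])
  have g_measurable [measurable]: "g \<in> borel_measurable borel"
    using g by (intro borel_measurable_linear orthogonal_transformation_linear)
  have inv_g: "orthogonal_transformation (inv g)"
    using g by (rule orthogonal_transformation_inv)
  fix l u :: "real ^ 'n::{finite,wellorder}"
  assume le: "\<And>b. b \<in> Basis \<Longrightarrow> l \<bullet> b \<le> u \<bullet> b"
  have preimage: "g -` box l u = inv g ` box l u"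
    using orthogonal_transformation_bij[OF g] by (rule bij_vimage_eq_inv_image)
  have "g -` box l u \<in> sets borel"
    using measurable_sets[OF g_measurable, of "box l u"] by simp
  then have "emeasure (distr lborel borel g) (box l u) = emeasure lebesgue (inv g ` box l u)"
    by (simp add: emeasure_distr preimage)
  also have "\<dots> = ennreal (measure lebesgue (inv g ` box l u))"
    using inv_g by (intro emeasure_eq_measure2 measurable_orthogonal_image) simp_all
  also have "\<dots> = emeasure lborel (box l u)"
    using inv_g by (simp add: measure_orthogonal_image emeasure_eq_measure2)
  also have "\<dots> = (\<Prod>b\<in>Basis. (u - l) \<bullet> b)"
    using le by simp
  finally show "emeasure (distr lborel borel g) (box l u) = (\<Prod>b\<in>Basis. (u - l) \<bullet> b)" .
qed simp

lemma lborel_distr_from_cart: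
  "distr lborel borel (from_cart :: real ^ 'a basis_index \<Rightarrow> 'a::euclidean_space) = lborel"
proof -
  have "distr lborel borel (from_cart :: real ^ 'a basis_index \<Rightarrow> 'a)
      = distr (distr lborel borel (to_cart :: 'a \<Rightarrow> _)) borel from_cart"
    by (simp add: lborel_distr_to_cart)
  also have "\<dots> = distr lborel borel (\<lambda>x. x)"
    by (subst distr_distr) (simp_all add: o_def)
  finally show ?thesis
    by (simp add: distr_id2)
qed

lemma lborel_distr_orthogonal:
  fixes g :: "'a::euclidean_space \<Rightarrow> 'a"
  assumes g: "orthogonal_transformation g"
  shows "distr lborel borel g = lborel"
proof -
  define g_cart where "g_cart = to_cart \<circ> g \<circ> (from_cart :: real ^ 'a basis_index \<Rightarrow> 'a)"
  have lin: "linear g"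
    using g by (rule orthogonal_transformation_linear)
  then have [measurable]: "g \<in> borel_measurable borel"
    by (rule borel_measurable_linear)
  have "orthogonal_transformation g_cart"
    unfolding orthogonal_transformation_def
  proof
    show "linear g_cart"
      unfolding g_cart_def by (intro linear_compose linear_to_cart linear_from_cart lin)
    show "\<forall>v w. g_cart v \<bullet> g_cart w = v \<bullet> w"
    proof (intro allI)
      fix v w :: "real ^ 'a basis_index"
      have "g_cart v \<bullet> g_cart w = from_cart v \<bullet> from_cart w"
        using g by (simp add: g_cart_def inner_to_cart orthogonal_transformation_def)
      also have "\<dots> = v \<bullet> w"
        using inner_to_cart[of "from_cart v" "from_cart w :: 'a"] by simp
      finally show "g_cart v \<bullet> g_cart w = v \<bullet> w" .
    qed
  qed
  then have distr_g_cart: "distr lborel borel g_cart = lborel"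
    by (rule lborel_distr_orthogonal_cart)
  have [measurable]: "g_cart \<in> borel_measurable borel"
    unfolding g_cart_def by measurable
  have "g = from_cart \<circ> g_cart \<circ> to_cart"
    by (simp add: g_cart_def fun_eq_iff)
  then have "distr lborel borel g = distr (distr (distr lborel borel to_cart) borel g_cart) borel from_cart"
    by (simp add: distr_distr o_assoc)
  also have "\<dots> = lborel"
    by (simp add: lborel_distr_to_cart distr_g_cart lborel_distr_from_cart)
  finally show ?thesis .
qed

section \<open>Maps that rescale Lebesgue measure\<close>

definition rescales_lborel :: "('a::euclidean_space \<Rightarrow> 'a) \<Rightarrow> ennreal \<Rightarrow> bool" where
  "rescales_lborel \<Phi> c \<longleftrightarrow> \<Phi> \<in> borel_measurable borel \<and>
     (\<forall>h::'a \<Rightarrow> ennreal. h \<in> borel_measurable borel \<longrightarrow>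
        (\<integral>\<^sup>+x. h (\<Phi> x) \<partial>lborel) = c * (\<integral>\<^sup>+x. h x \<partial>lborel))"

lemma rescales_lborelD:
  "rescales_lborel \<Phi> c \<Longrightarrow> h \<in> borel_measurable borel \<Longrightarrow>
     (\<integral>\<^sup>+x. h (\<Phi> x) \<partial>lborel) = c * (\<integral>\<^sup>+x. h x \<partial>lborel)"
  by (simp add: rescales_lborel_def)

lemma rescales_lborel_comp:
  assumes \<Phi>: "rescales_lborel \<Phi> a" and \<Psi>: "rescales_lborel \<Psi> b"
  shows "rescales_lborel (\<Psi> \<circ> \<Phi>) (a * b)"
  unfolding rescales_lborel_def
proof (intro conjI allI impI)
  have [measurable]: "\<Phi> \<in> borel_measurable borel" "\<Psi> \<in> borel_measurable borel"
    using \<Phi> \<Psi> by (simp_all add: rescales_lborel_def)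
  show "\<Psi> \<circ> \<Phi> \<in> borel_measurable borel"
    by measurable
  fix h :: "'a \<Rightarrow> ennreal"
  assume [measurable]: "h \<in> borel_measurable borel"
  have "(\<integral>\<^sup>+x. h ((\<Psi> \<circ> \<Phi>) x) \<partial>lborel) = a * (\<integral>\<^sup>+x. h (\<Psi> x) \<partial>lborel)"
    using rescales_lborelD[OF \<Phi>, of "h \<circ> \<Psi>"] by simp
  also have "\<dots> = a * b * (\<integral>\<^sup>+x. h x \<partial>lborel)"
    by (simp add: rescales_lborelD[OF \<Psi>] mult.assoc)
  finally show "(\<integral>\<^sup>+x. h ((\<Psi> \<circ> \<Phi>) x) \<partial>lborel) = a * b * (\<integral>\<^sup>+x. h x \<partial>lborel)" .
qed

lemma rescales_lborel_distr_eq: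
  assumes [measurable]: "\<Phi> \<in> borel_measurable borel" and "distr lborel borel \<Phi> = lborel"
  shows "rescales_lborel \<Phi> 1"
  unfolding rescales_lborel_def
proof (intro conjI allI impI)
  fix h :: "'a \<Rightarrow> ennreal"
  assume [measurable]: "h \<in> borel_measurable borel"
  have "(\<integral>\<^sup>+x. h (\<Phi> x) \<partial>lborel) = (\<integral>\<^sup>+x. h x \<partial>distr lborel borel \<Phi>)"
    by (rule nn_integral_distr[symmetric]) simp_all
  then show "(\<integral>\<^sup>+x. h (\<Phi> x) \<partial>lborel) = 1 * (\<integral>\<^sup>+x. h x \<partial>lborel)"
    by (simp add: assms(2))
qed simp

lemma rescales_lborel_orthogonal:
  assumes "orthogonal_transformation g"
  shows "rescales_lborel g 1"
  using assms
  by (intro rescales_lborel_distr_eq borel_measurable_linear orthogonal_transformation_linear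
      lborel_distr_orthogonal)

lemma rescales_lborel_translation: "rescales_lborel (\<lambda>x. x + t) 1"
proof -
  have "(\<lambda>x. x + t) = (+) t"
    by (simp add: fun_eq_iff add.commute)
  then show ?thesis
    by (simp add: rescales_lborel_distr_eq lborel_distr_plus)
qed

lemma rescales_lborel_scaleR:
  assumes c: "c \<noteq> 0"
  shows "rescales_lborel (\<lambda>x::'a::euclidean_space. c *\<^sub>R x) (ennreal (1 / \<bar>c\<bar> ^ DIM('a)))"
  unfolding rescales_lborel_def
proof (intro conjI allI impI)
  show "(\<lambda>x::'a. c *\<^sub>R x) \<in> borel_measurable borel"
    by measurable
  fix h :: "'a \<Rightarrow> ennreal"
  assume [measurable]: "h \<in> borel_measurable borel"
  have "(\<integral>\<^sup>+x. h x \<partial>lborel) = ennreal (\<bar>c\<bar> ^ DIM('a)) * (\<integral>\<^sup>+x. h (c *\<^sub>R x) \<partial>lborel)"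
    by (subst lborel_affine[OF c, of 0])
       (simp add: nn_integral_density nn_integral_distr nn_integral_cmult)
  moreover have "ennreal (1 / \<bar>c\<bar> ^ DIM('a)) * ennreal (\<bar>c\<bar> ^ DIM('a)) = 1"
    using c by (simp add: ennreal_mult''[symmetric] del: ennreal_1)
  ultimately show "(\<integral>\<^sup>+x. h (c *\<^sub>R x) \<partial>lborel) = ennreal (1 / \<bar>c\<bar> ^ DIM('a)) * (\<integral>\<^sup>+x. h x \<partial>lborel)"
    by (simp add: mult.assoc[symmetric])
qed

lemma rescales_lborel_fiber_fst:
  fixes \<phi> :: "'b::euclidean_space \<Rightarrow> 'a::euclidean_space \<Rightarrow> 'a"
  assumes meas: "(\<lambda>z. (\<phi> (snd z) (fst z), snd z)) \<in> borel_measurable borel"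
    and \<phi>: "\<And>y. rescales_lborel (\<phi> y) a"
  shows "rescales_lborel (\<lambda>z. (\<phi> (snd z) (fst z), snd z)) a"
  unfolding rescales_lborel_def
proof (intro conjI allI impI meas)
  fix h :: "'a \<times> 'b \<Rightarrow> ennreal"
  assume h: "h \<in> borel_measurable borel"
  then have [measurable]: "h \<in> borel_measurable (lborel \<Otimes>\<^sub>M lborel)"
    by (simp add: lborel_prod)
  have "(\<lambda>z. h (\<phi> (snd z) (fst z), snd z)) \<in> borel_measurable (lborel \<Otimes>\<^sub>M lborel)"
    using measurable_comp[OF meas h] by (simp add: lborel_prod o_def)
  then have "(\<integral>\<^sup>+z. h (\<phi> (snd z) (fst z), snd z) \<partial>lborel) = (\<integral>\<^sup>+y. \<integral>\<^sup>+x. h (\<phi> y x, y) \<partial>lborel \<partial>lborel)"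
    using lborel_pair.nn_integral_snd[of "\<lambda>z. h (\<phi> (snd z) (fst z), snd z)"] by (simp add: lborel_prod)
  also have "\<dots> = (\<integral>\<^sup>+y. a * \<integral>\<^sup>+x. h (x, y) \<partial>lborel \<partial>lborel)"
    using h by (intro nn_integral_cong rescales_lborelD[OF \<phi>]) measurable
  also have "\<dots> = a * (\<integral>\<^sup>+y. \<integral>\<^sup>+x. h (x, y) \<partial>lborel \<partial>lborel)"
    by (rule nn_integral_cmult) measurable
  also have "\<dots> = a * (\<integral>\<^sup>+z. h z \<partial>lborel)"
    using lborel_pair.nn_integral_snd[of h] h by (simp add: lborel_prod)
  finally show "(\<integral>\<^sup>+z. h (\<phi> (snd z) (fst z), snd z) \<partial>lborel) = a * (\<integral>\<^sup>+z. h z \<partial>lborel)" .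
qed

lemma rescales_lborel_fiber_snd:
  fixes \<phi> :: "'a::euclidean_space \<Rightarrow> 'b::euclidean_space \<Rightarrow> 'b"
  assumes meas: "(\<lambda>z. (fst z, \<phi> (fst z) (snd z))) \<in> borel_measurable borel"
    and \<phi>: "\<And>x. rescales_lborel (\<phi> x) a"
  shows "rescales_lborel (\<lambda>z. (fst z, \<phi> (fst z) (snd z))) a"
  unfolding rescales_lborel_def
proof (intro conjI allI impI meas)
  fix h :: "'a \<times> 'b \<Rightarrow> ennreal"
  assume h: "h \<in> borel_measurable borel"
  then have [measurable]: "h \<in> borel_measurable (lborel \<Otimes>\<^sub>M lborel)"
    by (simp add: lborel_prod)
  have hc: "(\<lambda>z. h (fst z, \<phi> (fst z) (snd z))) \<in> borel_measurable (lborel \<Otimes>\<^sub>M lborel)"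
    using measurable_comp[OF meas h] by (simp add: lborel_prod o_def)
  have "(\<integral>\<^sup>+z. h (fst z, \<phi> (fst z) (snd z)) \<partial>lborel) = (\<integral>\<^sup>+x. \<integral>\<^sup>+y. h (x, \<phi> x y) \<partial>lborel \<partial>lborel)"
    using lborel.nn_integral_fst[OF hc] by (simp add: lborel_prod)
  also have "\<dots> = (\<integral>\<^sup>+x. a * \<integral>\<^sup>+y. h (x, y) \<partial>lborel \<partial>lborel)"
    using h by (intro nn_integral_cong rescales_lborelD[OF \<phi>]) measurable
  also have "\<dots> = a * (\<integral>\<^sup>+x. \<integral>\<^sup>+y. h (x, y) \<partial>lborel \<partial>lborel)"
    by (rule nn_integral_cmult) measurable
  also have "\<dots> = a * (\<integral>\<^sup>+z. h z \<partial>lborel)"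
    using lborel.nn_integral_fst[of h lborel] h by (simp add: lborel_prod)
  finally show "(\<integral>\<^sup>+z. h (fst z, \<phi> (fst z) (snd z)) \<partial>lborel) = a * (\<integral>\<^sup>+z. h z \<partial>lborel)" .
qed

lemma borel_measurable_nn_integral_lborel:
  fixes G :: "'a::euclidean_space \<times> 'b::euclidean_space \<Rightarrow> ennreal"
  assumes G: "G \<in> borel_measurable borel"
  shows "(\<lambda>y. \<integral>\<^sup>+x. G (x, y) \<partial>lborel) \<in> borel_measurable borel"
proof -
  have "sets ((lborel :: 'a measure) \<Otimes>\<^sub>M (borel :: 'b measure)) = sets (borel \<Otimes>\<^sub>M borel)"
    by (rule sets_pair_measure_cong) simp_all
  then have sets_eq: "sets ((lborel :: 'a measure) \<Otimes>\<^sub>M (borel :: 'b measure)) = sets borel"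
    by (metis borel_prod)
  have "G \<in> borel_measurable (lborel \<Otimes>\<^sub>M borel)"
    using G by (simp add: measurable_cong_sets[OF sets_eq refl])
  then have "(\<lambda>(y, x). G (x, y)) \<in> borel_measurable (borel \<Otimes>\<^sub>M lborel)"
    by (rule measurable_pair_swap)
  then show ?thesis
    by (rule lborel.borel_measurable_nn_integral)
qed

lemma rescales_lborel_shear_fst:
  "rescales_lborel (\<lambda>z::'a::euclidean_space \<times> 'a. (fst z + s *\<^sub>R snd z, snd z)) 1"
proof (rule rescales_lborel_fiber_fst[where \<phi> = "\<lambda>y x. x + s *\<^sub>R y"])
  show "(\<lambda>z::'a \<times> 'a. (fst z + s *\<^sub>R snd z, snd z)) \<in> borel_measurable borel"
    by (intro borel_measurable_continuous_onI continuous_intros)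
qed (rule rescales_lborel_translation)

lemma rescales_lborel_shear_snd:
  "rescales_lborel (\<lambda>z::'a::euclidean_space \<times> 'a. (fst z, snd z + s *\<^sub>R fst z)) 1"
proof (rule rescales_lborel_fiber_snd[where \<phi> = "\<lambda>x y. y + s *\<^sub>R x"])
  show "(\<lambda>z::'a \<times> 'a. (fst z, snd z + s *\<^sub>R fst z)) \<in> borel_measurable borel"
    by (intro borel_measurable_continuous_onI continuous_intros)
qed (rule rescales_lborel_translation)

section \<open>The sphere measure and the collision space\<close>

lemma sets_sphere_measure [simp, measurable_cong]:
  "sets (sphere_measure :: 'a::euclidean_space measure) = sets borel"
  by (simp add: sphere_measure_def)

lemma space_sphere_measure [simp]: "space (sphere_measure :: 'a::euclidean_space measure) = UNIV"
  using sets_eq_imp_space_eq[OF sets_sphere_measure] by simp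

lemma nn_integral_sphere_measure:
  fixes g :: "'a::euclidean_space \<Rightarrow> ennreal"
  assumes [measurable]: "g \<in> borel_measurable borel"
  shows "(\<integral>\<^sup>+\<Omega>. g \<Omega> \<partial>sphere_measure)
    = of_nat DIM('a) * (\<integral>\<^sup>+x. g (x /\<^sub>R norm x) * indicator (ball 0 1) x \<partial>lborel)"
proof -
  have [measurable]: "(\<lambda>x::'a. x /\<^sub>R norm x) \<in> measurable (restrict_space lborel (ball 0 1)) borel"
    by (rule measurable_restrict_space1) simp
  have "(\<integral>\<^sup>+\<Omega>. g \<Omega> \<partial>sphere_measure)
      = of_nat DIM('a) * (\<integral>\<^sup>+x. g (x /\<^sub>R norm x) \<partial>restrict_space lborel (ball 0 1))"
    unfolding sphere_measure_def by (simp add: nn_integral_scale_measure nn_integral_distr)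
  also have "(\<integral>\<^sup>+x. g (x /\<^sub>R norm x) \<partial>restrict_space lborel (ball 0 1))
      = (\<integral>\<^sup>+x. g (x /\<^sub>R norm x) * indicator (ball 0 1) x \<partial>lborel)"
    by (rule nn_integral_restrict_space) simp
  finally show ?thesis .
qed

lemma emeasure_sphere_measure:
  assumes "A \<in> sets borel"
  shows "emeasure (sphere_measure :: 'a::euclidean_space measure) A
    = of_nat DIM('a) * emeasure lborel ((\<lambda>x. x /\<^sub>R norm x) -` A \<inter> ball 0 1)"
proof -
  have "(\<lambda>x::'a. x /\<^sub>R norm x) \<in> measurable (restrict_space lborel (ball 0 1)) borel"
    by (rule measurable_restrict_space1) simp
  moreover have "emeasure (restrict_space lborel (ball (0::'a) 1))
      ((\<lambda>x. x /\<^sub>R norm x) -` A \<inter> space (restrict_space lborel (ball 0 1)))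
    = emeasure lborel ((\<lambda>x. x /\<^sub>R norm x) -` A \<inter> ball (0::'a) 1)"
    by (subst emeasure_restrict_space) auto
  ultimately show ?thesis
    using assms by (simp add: sphere_measure_def emeasure_distr)
qed

lemma finite_measure_sphere_measure: "finite_measure (sphere_measure :: 'a::euclidean_space measure)"
proof
  have "emeasure lborel ((\<lambda>x::'a. x /\<^sub>R norm x) -` UNIV \<inter> ball 0 1) < \<infinity>"
    by (intro emeasure_bounded_finite) auto
  then show "emeasure (sphere_measure :: 'a measure) (space sphere_measure) \<noteq> \<infinity>"
    by (simp add: emeasure_sphere_measure ennreal_mult_eq_top_iff)
qed

interpretation sphere_measure: finite_measure "sphere_measure :: 'a::euclidean_space measure"
  by (rule finite_measure_sphere_measure)

lemma AE_sphere_measure_norm: "AE \<Omega> in (sphere_measure :: 'a::euclidean_space measure). norm \<Omega> = 1"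
proof (rule AE_I')
  let ?N = "{\<Omega>::'a. norm \<Omega> \<noteq> 1}"
  have "x \<in> (\<lambda>x. x /\<^sub>R norm x) -` ?N \<inter> ball 0 1 \<longleftrightarrow> x = 0" for x :: 'a
    by (cases "x = 0") auto
  then have "(\<lambda>x. x /\<^sub>R norm x) -` ?N \<inter> ball 0 1 = {0::'a}"
    by blast
  then have "emeasure (sphere_measure :: 'a measure) ?N = 0"
    by (simp add: emeasure_sphere_measure)
  then show "?N \<in> null_sets sphere_measure"
    by (simp add: null_sets_def)
qed auto

lemma nn_integral_sphere_measure_uminus:
  fixes g :: "'a::euclidean_space \<Rightarrow> ennreal"
  assumes [measurable]: "g \<in> borel_measurable borel"
  shows "(\<integral>\<^sup>+\<Omega>. g (- \<Omega>) \<partial>sphere_measure) = (\<integral>\<^sup>+\<Omega>. g \<Omega> \<partial>sphere_measure)"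
proof -
  define G where "G x = g (x /\<^sub>R norm x) * indicator (ball (0::'a) 1) x" for x
  have [measurable]: "ball (0::'a) 1 \<in> sets borel"
    by simp
  have "G \<in> borel_measurable borel"
    unfolding G_def by measurable
  then have "(\<integral>\<^sup>+x. G ((-1) *\<^sub>R x) \<partial>lborel) = (\<integral>\<^sup>+x. G x \<partial>lborel)"
    using rescales_lborelD[OF rescales_lborel_scaleR[of "-1"]] by simp
  then show ?thesis
    by (simp add: nn_integral_sphere_measure G_def indicator_def)
qed

lemma coll_space_eq: "(coll_space :: (('a::euclidean_space \<times> 'a) \<times> 'a) measure) = lborel \<Otimes>\<^sub>M sphere_measure"
  by (simp add: coll_space_def lborel_prod)

lemma sets_coll_space [simp, measurable_cong]:
  "sets (coll_space :: (('a::euclidean_space \<times> 'a) \<times> 'a) measure) = sets borel"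
proof -
  have "sets (coll_space :: (('a \<times> 'a) \<times> 'a) measure) = sets (borel \<Otimes>\<^sub>M borel)"
    unfolding coll_space_eq by (rule sets_pair_measure_cong) simp_all
  then show ?thesis
    by (metis borel_prod)
qed

lemma space_coll_space [simp]: "space (coll_space :: (('a::euclidean_space \<times> 'a) \<times> 'a) measure) = UNIV"
  using sets_eq_imp_space_eq[OF sets_coll_space] by simp

interpretation coll_space:
  pair_sigma_finite "lborel :: ('a::euclidean_space \<times> 'a) measure" "sphere_measure :: 'a measure"
  by unfold_locales

lemma AE_coll_space_norm:
  "AE x in (coll_space :: (('a::euclidean_space \<times> 'a) \<times> 'a) measure). norm (snd x) = 1"
  unfolding coll_space_eq
proof (rule coll_space.AE_pair_measure)
  show "{x \<in> space (lborel \<Otimes>\<^sub>M sphere_measure). norm (snd x) = 1}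
      \<in> sets (lborel \<Otimes>\<^sub>M (sphere_measure :: 'a measure))"
    by measurable
qed (simp add: AE_sphere_measure_norm)

section \<open>Collision geometry\<close>

definition reflect :: "'a::real_inner \<Rightarrow> 'a \<Rightarrow> 'a" where
  "reflect \<Omega> u = u - (2 * (u \<bullet> \<Omega>)) *\<^sub>R \<Omega>"

lemma reflect_uminus [simp]: "reflect (- \<Omega>) u = reflect \<Omega> u"
  by (simp add: reflect_def)

lemma reflect_scaleR: "reflect \<Omega> (c *\<^sub>R u) = c *\<^sub>R reflect \<Omega> u"
  by (simp add: reflect_def algebra_simps)

context
  fixes \<Omega> :: "'a::euclidean_space"
  assumes unit: "norm \<Omega> = 1"
begin

lemma inner_reflect: "reflect \<Omega> u \<bullet> \<Omega> = - (u \<bullet> \<Omega>)"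
  using unit by (simp add: reflect_def inner_diff_left dot_square_norm)

lemma reflect_reflect [simp]: "reflect \<Omega> (reflect \<Omega> u) = u"
  by (simp add: reflect_def[of \<Omega> "reflect \<Omega> u"] inner_reflect) (simp add: reflect_def)

lemma orthogonal_transformation_reflect: "orthogonal_transformation (reflect \<Omega>)"
  unfolding orthogonal_transformation_def
proof
  show "linear (reflect \<Omega>)"
    by (rule linearI) (simp_all add: reflect_def inner_add_left algebra_simps)
  show "\<forall>v w. reflect \<Omega> v \<bullet> reflect \<Omega> w = v \<bullet> w"
    using unit by (simp add: reflect_def inner_diff_left inner_diff_right algebra_simps
        inner_commute dot_square_norm)
qed

lemma norm_reflect [simp]: "norm (reflect \<Omega> u) = norm u"
  using orthogonal_transformation_reflect by (rule orthogonal_transformation_norm)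

end

definition coll_swap :: "nat \<times> nat \<times> nat \<Rightarrow> nat \<times> nat \<times> nat" where
  "coll_swap k = (case k of (m, m1, m') \<Rightarrow> (m', m + m1 - m', m))"

lemma coll_swap_in_indices: "k \<in> coll_indices \<Longrightarrow> coll_swap k \<in> coll_indices"
  by (auto simp: coll_swap_def coll_indices_def)

lemma coll_swap_coll_swap: "k \<in> coll_indices \<Longrightarrow> coll_swap (coll_swap k) = k"
  by (auto simp: coll_swap_def coll_indices_def)

lemma bij_betw_coll_swap: "bij_betw coll_swap coll_indices coll_indices"
  by (rule bij_betw_byWitness[where f' = coll_swap])
     (auto simp: coll_swap_coll_swap coll_swap_in_indices)

lemma sqrt_mult_sqrt_div:
  fixes a p q :: real
  assumes "0 < p" "0 < q"
  shows "sqrt a * sqrt (q / p) = q * sqrt (a / (p * q))"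
proof -
  have "sqrt a * sqrt (q / p) = sqrt (q\<^sup>2 * (a / (p * q)))"
    using assms by (simp add: real_sqrt_mult[symmetric] field_simps power2_eq_square)
  also have "\<dots> = q * sqrt (a / (p * q))"
    using assms by (simp only: real_sqrt_mult real_sqrt_abs abs_of_pos)
  finally show ?thesis .
qed

definition coll_ratio :: "nat \<Rightarrow> nat \<Rightarrow> nat \<Rightarrow> real" where
  "coll_ratio m m1 m' = sqrt (real m * real m1 / (real m' * real (m + m1 - m')))"

context
  fixes m m1 m' :: nat
  assumes k: "(m, m1, m') \<in> coll_indices"
begin

lemma coll_indices_pos: "0 < real m" "0 < real m1" "0 < real m'" "0 < real (m + m1 - m')"
  and coll_indices_sum: "m' + (m + m1 - m') = m + m1"
  and of_nat_coll_indices_diff: "real (m + m1 - m') = real m + real m1 - real m'"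
  using k by (auto simp: coll_indices_def of_nat_diff)

lemma coll_ratio_pos: "0 < coll_ratio m m1 m'"
  using coll_indices_pos by (simp add: coll_ratio_def)

lemma coll_ratio_coll_swap: "coll_ratio m' (m + m1 - m') m * coll_ratio m m1 m' = 1"
  using coll_indices_pos by (simp add: coll_indices_sum coll_ratio_def real_sqrt_mult[symmetric])

lemma coll_ratio_pow:
  "coll_ratio m m1 m' ^ n * (real m' * real (m + m1 - m')) powr (real n / 2)
    = (real m * real m1) powr (real n / 2)"
proof -
  have "sqrt x ^ n = x powr (real n / 2)" if "0 < x" for x :: real
    using that by (simp add: powr_half_sqrt[symmetric] powr_powr powr_realpow[symmetric])
  then show ?thesis
    using coll_indices_pos by (simp add: coll_ratio_def powr_divide powr_mult)
qed

lemma post_v_reflect: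
  "post_v m m1 m' v v1 \<Omega> = (1 / real (m + m1)) *\<^sub>R (real m *\<^sub>R v + real m1 *\<^sub>R v1)
     + (real (m + m1 - m') / real (m + m1) * coll_ratio m m1 m') *\<^sub>R reflect \<Omega> (v - v1)"
proof -
  have "sqrt (real m * real m1) * sqrt (real (m + m1 - m') / real m')
      = real (m + m1 - m') * coll_ratio m m1 m'"
    using sqrt_mult_sqrt_div coll_indices_pos by (simp add: coll_ratio_def)
  then show ?thesis
    by (simp add: post_v_def reflect_def)
qed

lemma post_v1_reflect:
  "post_v1 m m1 m' v v1 \<Omega> = (1 / real (m + m1)) *\<^sub>R (real m *\<^sub>R v + real m1 *\<^sub>R v1)
     - (real m' / real (m + m1) * coll_ratio m m1 m') *\<^sub>R reflect \<Omega> (v - v1)"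
proof -
  have "sqrt (real m * real m1) * sqrt (real m' / real (m + m1 - m'))
      = real m' * coll_ratio m m1 m'"
    using sqrt_mult_sqrt_div coll_indices_pos by (simp add: coll_ratio_def mult.commute)
  then show ?thesis
    by (simp add: post_v1_def reflect_def)
qed

lemma post_v_diff:
  "post_v m m1 m' v v1 \<Omega> - post_v1 m m1 m' v v1 \<Omega> = coll_ratio m m1 m' *\<^sub>R reflect \<Omega> (v - v1)"
proof -
  define M p q c where "M = real (m + m1)" and "p = real m'" and "q = real (m + m1 - m')"
    and "c = coll_ratio m m1 m'"
  have "q + p = M" "M \<noteq> 0"
    using coll_indices_pos coll_indices_sum
    by (simp_all add: M_def p_def q_def of_nat_add[symmetric] add.commute del: of_nat_add)
  then have "q / M * c + p / M * c = c"
    by (simp add: add_divide_distrib[symmetric] distrib_right[symmetric])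
  then show ?thesis
    unfolding post_v_reflect post_v1_reflect
    by (simp add: scaleR_add_left[symmetric] M_def p_def q_def c_def)
qed

lemma momentum_post_v:
  "real m' *\<^sub>R post_v m m1 m' v v1 \<Omega> + real (m + m1 - m') *\<^sub>R post_v1 m m1 m' v v1 \<Omega>
    = real m *\<^sub>R v + real m1 *\<^sub>R v1"
proof -
  define M p q c r where "M = real (m + m1)" and "p = real m'" and "q = real (m + m1 - m')"
    and "c = coll_ratio m m1 m'" and "r = reflect \<Omega> (v - v1)"
  have "p + q = M" "0 < M"
    using coll_indices_pos coll_indices_sum
    by (simp_all add: M_def p_def q_def of_nat_add[symmetric] del: of_nat_add)
  have "p *\<^sub>R ((1 / M) *\<^sub>R (real m *\<^sub>R v + real m1 *\<^sub>R v1) + (q / M * c) *\<^sub>R r)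
      + q *\<^sub>R ((1 / M) *\<^sub>R (real m *\<^sub>R v + real m1 *\<^sub>R v1) - (p / M * c) *\<^sub>R r)
      = ((p + q) / M) *\<^sub>R (real m *\<^sub>R v + real m1 *\<^sub>R v1)"
    by (simp add: algebra_simps add_divide_distrib)
  also have "\<dots> = real m *\<^sub>R v + real m1 *\<^sub>R v1"
    using \<open>p + q = M\<close> \<open>0 < M\<close> by simp
  finally show ?thesis
    by (simp add: post_v_reflect post_v1_reflect M_def p_def q_def c_def r_def)
qed

end

lemma velocities_from_momentum:
  fixes v v1 :: "'a::real_vector" and m m1 :: real
  assumes "m + m1 \<noteq> 0"
  shows "(1 / (m + m1)) *\<^sub>R (m *\<^sub>R v + m1 *\<^sub>R v1) + (m1 / (m + m1)) *\<^sub>R (v - v1) = v"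
    and "(1 / (m + m1)) *\<^sub>R (m *\<^sub>R v + m1 *\<^sub>R v1) - (m / (m + m1)) *\<^sub>R (v - v1) = v1"
  using assms by (simp_all add: algebra_simps scaleR_add_left[symmetric] add_divide_distrib[symmetric])

definition coll_map :: "nat \<times> nat \<times> nat \<Rightarrow> ('a::euclidean_space \<times> 'a) \<times> 'a \<Rightarrow> ('a \<times> 'a) \<times> 'a" where
  "coll_map k x = (case k of (m, m1, m') \<Rightarrow> case x of ((v, v1), \<Omega>) \<Rightarrow>
     ((post_v m m1 m' v v1 \<Omega>, post_v1 m m1 m' v v1 \<Omega>), - \<Omega>))"

lemma coll_map_simp [simp]:
  "coll_map (m, m1, m') ((v, v1), \<Omega>) = ((post_v m m1 m' v v1 \<Omega>, post_v1 m m1 m' v v1 \<Omega>), - \<Omega>)"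
  by (simp add: coll_map_def)

lemma coll_map_measurable [measurable]: "coll_map k \<in> borel_measurable borel"
proof -
  obtain m m1 m' where k: "k = (m, m1, m')"
    by (metis prod.exhaust)
  have "coll_map k = (\<lambda>x. ((post_v m m1 m' (fst (fst x)) (snd (fst x)) (snd x),
      post_v1 m m1 m' (fst (fst x)) (snd (fst x)) (snd x)), - snd x))"
    by (auto simp: k fun_eq_iff)
  also have "\<dots> \<in> borel_measurable borel"
    unfolding post_v_def post_v1_def by (intro borel_measurable_continuous_onI continuous_intros)
  finally show ?thesis .
qed

lemma coll_map_coll_map:
  assumes k: "(m, m1, m') \<in> coll_indices" and unit: "norm \<Omega> = 1"
  shows "coll_map (coll_swap (m, m1, m')) (coll_map (m, m1, m') ((v, v1), \<Omega>)) = ((v, v1), \<Omega>)"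
proof -
  define w w1 where "w = post_v m m1 m' v v1 \<Omega>" and "w1 = post_v1 m m1 m' v v1 \<Omega>"
  have k': "(m', m + m1 - m', m) \<in> coll_indices"
    using coll_swap_in_indices[OF k] by (simp add: coll_swap_def)
  have sum: "m' + (m + m1 - m') = m + m1" "m' + (m + m1 - m') - m = m1"
    using coll_indices_sum[OF k] by simp_all
  have M: "real m + real m1 \<noteq> 0"
    using coll_indices_pos[OF k] by simp
  have mom: "real m' *\<^sub>R w + real (m + m1 - m') *\<^sub>R w1 = real m *\<^sub>R v + real m1 *\<^sub>R v1"
    using momentum_post_v[OF k] by (simp add: w_def w1_def)
  have "coll_ratio m' (m + m1 - m') m *\<^sub>R reflect \<Omega> (w - w1) = v - v1"
    using coll_ratio_coll_swap[OF k] unit by (simp add: w_def w1_def post_v_diff[OF k] reflect_scaleR)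
  then have rel: "(a * coll_ratio m' (m + m1 - m') m) *\<^sub>R reflect \<Omega> (w - w1) = a *\<^sub>R (v - v1)" for a
    by (metis scaleR_scaleR)
  have "post_v m' (m + m1 - m') m w w1 (- \<Omega>) = v"
    using velocities_from_momentum(1)[OF M, of v v1] rel[of "real m1 / (real m + real m1)"]
    by (simp add: post_v_reflect[OF k'] sum mom)
  moreover have "post_v1 m' (m + m1 - m') m w w1 (- \<Omega>) = v1"
    using velocities_from_momentum(2)[OF M, of v v1] rel[of "real m / (real m + real m1)"]
    by (simp add: post_v1_reflect[OF k'] sum mom)
  ultimately show ?thesis
    by (simp add: coll_swap_def w_def w1_def)
qed

definition coll_rate :: "(real \<Rightarrow> real \<Rightarrow> real) \<Rightarrow> nat \<Rightarrow> nat \<Rightarrow> ('a::euclidean_space \<times> 'a) \<times> 'a \<Rightarrow> real" where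
  "coll_rate BB m m1 x = (case x of ((v, v1), \<Omega>) \<Rightarrow>
     (if (v - v1) \<bullet> \<Omega> \<le> 0 then 1 else 0) * coll_kernel BB m m1 v v1 \<Omega>)"

lemma coll_rate_nonneg:
  assumes BB_nonneg: "\<And>e c. 0 \<le> e \<Longrightarrow> -1 \<le> c \<Longrightarrow> c \<le> 1 \<Longrightarrow> BB e c \<ge> 0"
    and unit: "norm \<Omega> = 1"
  shows "0 \<le> coll_rate BB m m1 ((v, v1), \<Omega>)"
proof -
  have "norm ((v - v1) /\<^sub>R norm (v - v1)) \<le> 1"
    by (cases "v = v1") simp_all
  then have "\<bar>\<Omega> \<bullet> ((v - v1) /\<^sub>R norm (v - v1))\<bar> \<le> 1"
    using Cauchy_Schwarz_ineq2[of \<Omega> "(v - v1) /\<^sub>R norm (v - v1)"] unit by simp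
  then show ?thesis
    unfolding coll_rate_def coll_kernel_def by (auto intro!: BB_nonneg)
qed

lemma coll_rate_coll_map:
  assumes k: "(m, m1, m') \<in> coll_indices" and unit: "norm \<Omega> = 1"
  shows "coll_rate BB m' (m + m1 - m') (coll_map (m, m1, m') ((v, v1), \<Omega>)) = coll_rate BB m m1 ((v, v1), \<Omega>)"
proof -
  define c u where "c = coll_ratio m m1 m'" and "u = v - v1"
  define w where "w = post_v m m1 m' v v1 \<Omega> - post_v1 m m1 m' v v1 \<Omega>"
  have c: "0 < c"
    using coll_ratio_pos[OF k] by (simp add: c_def)
  have w: "w = c *\<^sub>R reflect \<Omega> u"
    by (simp add: w_def c_def u_def post_v_diff[OF k])
  have norm_w: "norm w = c * norm u"
    using c unit by (simp add: w)
  have "real m' * real (m + m1 - m') / real (m' + (m + m1 - m')) * (norm w)\<^sup>2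
      = real m * real m1 / real (m + m1) * (norm u)\<^sup>2"
    using coll_indices_pos[OF k] coll_indices_sum[OF k]
    by (simp add: norm_w power_mult_distrib c_def coll_ratio_def)
  moreover have "(- \<Omega>) \<bullet> (w /\<^sub>R norm w) = \<Omega> \<bullet> (u /\<^sub>R norm u)"
  proof -
    have "\<Omega> \<bullet> reflect \<Omega> u = - (\<Omega> \<bullet> u)"
      using inner_reflect[OF unit, of u] by (simp add: inner_commute)
    then show ?thesis
      using c unit by (simp add: w norm_w)
  qed
  moreover have "(w \<bullet> - \<Omega> \<le> 0) = (u \<bullet> \<Omega> \<le> 0)"
    using c unit by (simp add: w inner_reflect mult_le_0_iff)
  ultimately show ?thesis
    by (simp add: coll_rate_def coll_kernel_def w_def u_def)
qed

section \<open>Change of variables under the collision map\<close>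

lemma rescales_lborel_scaleR_reflect:
  fixes \<Omega> :: "'a::euclidean_space"
  assumes "norm \<Omega> = 1" and "0 < c"
  shows "rescales_lborel (\<lambda>x. c *\<^sub>R reflect \<Omega> x) (ennreal (1 / c ^ DIM('a)))"
  using rescales_lborel_comp[OF rescales_lborel_orthogonal[OF orthogonal_transformation_reflect[OF assms(1)]]
      rescales_lborel_scaleR[of c]] assms(2)
  by (simp add: o_def)

lemma rescales_lborel_post_velocities:
  fixes \<Omega> :: "'a::euclidean_space"
  assumes k: "(m, m1, m') \<in> coll_indices" and unit: "norm \<Omega> = 1"
  shows "rescales_lborel (\<lambda>z. (post_v m m1 m' (fst z) (snd z) \<Omega>, post_v1 m m1 m' (fst z) (snd z) \<Omega>))
           (ennreal (1 / coll_ratio m m1 m' ^ DIM('a)))"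
proof -
  define M c where "M = real (m + m1)" and "c = coll_ratio m m1 m'"
  have c: "0 < c"
    using coll_ratio_pos[OF k] by (simp add: c_def)
  have "M \<noteq> 0"
    using coll_indices_pos[OF k] by (simp add: M_def)
  have rotate: "rescales_lborel (\<lambda>z::'a \<times> 'a. (c *\<^sub>R reflect \<Omega> (fst z), snd z)) (ennreal (1 / c ^ DIM('a)))"
  proof (rule rescales_lborel_fiber_fst[where \<phi> = "\<lambda>_ x. c *\<^sub>R reflect \<Omega> x"])
    show "(\<lambda>z::'a \<times> 'a. (c *\<^sub>R reflect \<Omega> (fst z), snd z)) \<in> borel_measurable borel"
      unfolding reflect_def by (intro borel_measurable_continuous_onI continuous_intros)
  qed (rule rescales_lborel_scaleR_reflect[OF unit c])
  \<comment> \<open>Read right to left: pass to relative and centre-of-mass velocity, reflect and dilate the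
    relative velocity, and recombine with the outgoing masses.\<close>
  define \<Phi> :: "'a \<times> 'a \<Rightarrow> 'a \<times> 'a" where "\<Phi> =
    (\<lambda>z. (fst z + 1 *\<^sub>R snd z, snd z)) \<circ> (\<lambda>z. (fst z, snd z + (- (real m' / M)) *\<^sub>R fst z))
      \<circ> (\<lambda>z. (c *\<^sub>R reflect \<Omega> (fst z), snd z))
      \<circ> (\<lambda>z. (fst z, snd z + (real m / M) *\<^sub>R fst z)) \<circ> (\<lambda>z. (fst z + (-1) *\<^sub>R snd z, snd z))"
  have "rescales_lborel \<Phi> (1 * (1 * (ennreal (1 / c ^ DIM('a)) * (1 * 1))))"
    unfolding \<Phi>_def
    by (intro rescales_lborel_comp rescales_lborel_shear_fst rescales_lborel_shear_snd rotate)
  moreover have \<Phi>_pair: "\<Phi> (v, v1) = (post_v m m1 m' v v1 \<Omega>, post_v1 m m1 m' v v1 \<Omega>)" for v v1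
  proof -
    define C r where "C = (1 / M) *\<^sub>R (real m *\<^sub>R v + real m1 *\<^sub>R v1)" and "r = reflect \<Omega> (v - v1)"
    have "v1 + (real m / M) *\<^sub>R (v - v1) = C"
      using \<open>M \<noteq> 0\<close>
      by (simp add: C_def M_def algebra_simps scaleR_add_left[symmetric] add_divide_distrib[symmetric])
    moreover have "c - real m' / M * c = real (m + m1 - m') / M * c"
      using \<open>M \<noteq> 0\<close> by (simp add: M_def of_nat_coll_indices_diff[OF k] field_simps)
    moreover have "c *\<^sub>R r + (C + (- (real m' / M)) *\<^sub>R (c *\<^sub>R r)) = C + (c - real m' / M * c) *\<^sub>R r"
      by (simp add: algebra_simps)
    ultimately show ?thesis
      by (simp add: \<Phi>_def post_v_reflect[OF k] post_v1_reflect[OF k] C_def r_def M_def c_def)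
  qed
  moreover have "\<Phi> = (\<lambda>z. (post_v m m1 m' (fst z) (snd z) \<Omega>, post_v1 m m1 m' (fst z) (snd z) \<Omega>))"
    using \<Phi>_pair by (simp add: fun_eq_iff split_paired_all)
  ultimately show ?thesis
    by (simp add: c_def)
qed

lemma nn_integral_coll_map:
  fixes G :: "('a::euclidean_space \<times> 'a) \<times> 'a \<Rightarrow> ennreal"
  assumes k: "(m, m1, m') \<in> coll_indices" and G [measurable]: "G \<in> borel_measurable borel"
  shows "(\<integral>\<^sup>+x. G (coll_map (m, m1, m') x) \<partial>coll_space)
       = ennreal (1 / coll_ratio m m1 m' ^ DIM('a)) * (\<integral>\<^sup>+x. G x \<partial>coll_space)"
proof -
  define J where "J = ennreal (1 / coll_ratio m m1 m' ^ DIM('a))"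
  define H where "H \<Omega> = (\<integral>\<^sup>+w. G (w, \<Omega>) \<partial>lborel)" for \<Omega> :: 'a
  have sets_pair: "sets ((lborel :: ('a \<times> 'a) measure) \<Otimes>\<^sub>M (sphere_measure :: 'a measure)) = sets borel"
    using sets_coll_space[where 'a='a] unfolding coll_space_eq .
  have [measurable]: "H \<in> borel_measurable borel"
    unfolding H_def using G by (rule borel_measurable_nn_integral_lborel)
  have "(\<integral>\<^sup>+x. G (coll_map (m, m1, m') x) \<partial>coll_space)
      = (\<integral>\<^sup>+\<Omega>. \<integral>\<^sup>+w. G (coll_map (m, m1, m') (w, \<Omega>)) \<partial>lborel \<partial>sphere_measure)"
    unfolding coll_space_eq
    by (rule coll_space.nn_integral_snd[symmetric]) (simp add: measurable_cong_sets[OF sets_pair refl])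
  also have "\<dots> = (\<integral>\<^sup>+\<Omega>. J * H (- \<Omega>) \<partial>sphere_measure)"
  proof (rule nn_integral_cong_AE)
    show "AE \<Omega> in sphere_measure. (\<integral>\<^sup>+w. G (coll_map (m, m1, m') (w, \<Omega>)) \<partial>lborel) = J * H (- \<Omega>)"
      using AE_sphere_measure_norm
    proof (rule eventually_mono)
      fix \<Omega> :: 'a
      assume "norm \<Omega> = 1"
      have "(\<lambda>w. G (w, - \<Omega>)) \<in> borel_measurable borel"
        by measurable
      from rescales_lborelD[OF rescales_lborel_post_velocities[OF k \<open>norm \<Omega> = 1\<close>] this]
      show "(\<integral>\<^sup>+w. G (coll_map (m, m1, m') (w, \<Omega>)) \<partial>lborel) = J * H (- \<Omega>)"
        by (simp add: coll_map_def split_beta H_def J_def)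
    qed
  qed
  also have "\<dots> = J * (\<integral>\<^sup>+\<Omega>. H \<Omega> \<partial>sphere_measure)"
    by (simp add: nn_integral_cmult nn_integral_sphere_measure_uminus)
  also have "(\<integral>\<^sup>+\<Omega>. H \<Omega> \<partial>sphere_measure) = (\<integral>\<^sup>+x. G x \<partial>coll_space)"
    unfolding coll_space_eq H_def
    by (rule coll_space.nn_integral_snd) (simp add: measurable_cong_sets[OF sets_pair refl])
  finally show ?thesis
    by (simp add: J_def)
qed

lemma distr_coll_map:
  assumes k: "(m, m1, m') \<in> coll_indices"
  shows "distr coll_space coll_space (coll_map (m, m1, m'))
    = density (coll_space :: (('a::euclidean_space \<times> 'a) \<times> 'a) measure)
        (\<lambda>_. ennreal (1 / coll_ratio m m1 m' ^ DIM('a)))"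
proof (rule measure_eqI)
  fix A :: "(('a \<times> 'a) \<times> 'a) set"
  assume "A \<in> sets (distr coll_space coll_space (coll_map (m, m1, m')))"
  then have A: "A \<in> sets borel"
    by simp
  have "emeasure (distr coll_space coll_space (coll_map (m, m1, m'))) A
      = emeasure coll_space (coll_map (m, m1, m') -` A)"
    using A by (subst emeasure_distr) (simp_all add: measurable_cong_sets[OF sets_coll_space sets_coll_space])
  also have "\<dots> = (\<integral>\<^sup>+x. indicator (coll_map (m, m1, m') -` A) x \<partial>coll_space)"
    using measurable_sets_borel[OF coll_map_measurable A]
    by (intro nn_integral_indicator[symmetric]) simp
  also have "\<dots> = (\<integral>\<^sup>+x. indicator A (coll_map (m, m1, m') x) \<partial>coll_space)"
    by (simp add: indicator_vimage)
  also have "\<dots> = emeasure (density coll_space (\<lambda>_. ennreal (1 / coll_ratio m m1 m' ^ DIM('a)))) A"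
    using A by (simp add: nn_integral_coll_map[OF k] emeasure_density nn_integral_cmult_indicator)
  finally show "emeasure (distr coll_space coll_space (coll_map (m, m1, m'))) A
      = emeasure (density coll_space (\<lambda>_. ennreal (1 / coll_ratio m m1 m' ^ DIM('a)))) A" .
qed simp

lemma
  fixes F :: "('a::euclidean_space \<times> 'a) \<times> 'a \<Rightarrow> real"
  assumes k: "(m, m1, m') \<in> coll_indices" and F: "integrable coll_space F"
  shows integrable_coll_map: "integrable coll_space (\<lambda>x. F (coll_map (m, m1, m') x))"
    and integral_coll_map:
      "(\<integral>x. F (coll_map (m, m1, m') x) \<partial>coll_space) = (\<integral>x. F x \<partial>coll_space) / coll_ratio m m1 m' ^ DIM('a)"
proof -
  have [measurable]: "F \<in> borel_measurable coll_space"
    using F by (rule borel_measurable_integrable)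
  have coll_map: "coll_map (m, m1, m') \<in> coll_space \<rightarrow>\<^sub>M coll_space"
    by (simp add: measurable_cong_sets[OF sets_coll_space sets_coll_space])
  have nonneg: "0 \<le> 1 / coll_ratio m m1 m' ^ DIM('a)"
    using coll_ratio_pos[OF k] by simp
  show "integrable coll_space (\<lambda>x. F (coll_map (m, m1, m') x))"
    using F nonneg
    by (simp add: integrable_distr_eq[OF coll_map, symmetric] distr_coll_map[OF k] integrable_density)
  show "(\<integral>x. F (coll_map (m, m1, m') x) \<partial>coll_space) = (\<integral>x. F x \<partial>coll_space) / coll_ratio m m1 m' ^ DIM('a)"
    using nonneg
    by (simp add: integral_distr[OF coll_map, symmetric] distr_coll_map[OF k] integral_density)
qed

section \<open>The entropy inequality\<close>

lemma exp_diff_mult_nonpos: "(exp a - exp b) * (b - a) \<le> (0::real)"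
proof (cases "a \<le> b")
  case True
  then show ?thesis
    by (intro mult_nonpos_nonneg) simp_all
next
  case False
  then show ?thesis
    by (intro mult_nonneg_nonpos) simp_all
qed

lemma mult_eq_exp_entropy_test:
  fixes f :: "nat \<Rightarrow> 'a::euclidean_space \<Rightarrow> real"
  assumes "1 \<le> m" "0 < \<gamma> m" "0 < f m v"
  shows "\<gamma> m * f m v = real m powr (real DIM('a) / 2) * exp (entropy_test \<gamma> f m v)"
  using assms by (simp add: entropy_test_def)

lemma coll_integrand_eq:
  "coll_integrand BB f \<phi> (m, m1, m') ((v, v1), \<Omega>) = coll_rate BB m m1 ((v, v1), \<Omega>) * f m v * f m1 v1 *
     (\<phi> m' (post_v m m1 m' v v1 \<Omega>) + \<phi> (m + m1 - m') (post_v1 m m1 m' v v1 \<Omega>) - \<phi> m v - \<phi> m1 v1)"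
  by (simp add: coll_integrand_def coll_term_def coll_weight_def coll_rate_def algebra_simps)

lemma coll_integrand_coll_map:
  fixes f :: "nat \<Rightarrow> 'a::euclidean_space \<Rightarrow> real" and v v1 \<Omega> :: 'a
  assumes k: "(m, m1, m') \<in> coll_indices" and unit: "norm \<Omega> = 1"
  defines "w \<equiv> post_v m m1 m' v v1 \<Omega>" and "w1 \<equiv> post_v1 m m1 m' v v1 \<Omega>"
  shows "coll_integrand BB f \<phi> (coll_swap (m, m1, m')) (coll_map (m, m1, m') ((v, v1), \<Omega>))
    = coll_rate BB m m1 ((v, v1), \<Omega>) * f m' w * f (m + m1 - m') w1
      * (\<phi> m v + \<phi> m1 v1 - \<phi> m' w - \<phi> (m + m1 - m') w1)"
proof -
  have "post_v m' (m + m1 - m') m w w1 (- \<Omega>) = v" "post_v1 m' (m + m1 - m') m w w1 (- \<Omega>) = v1"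
    "m' + (m + m1 - m') - m = m1"
    using coll_map_coll_map[OF k unit, of v v1] k
    by (auto simp: coll_swap_def w_def w1_def coll_indices_def)
  then show ?thesis
    using coll_rate_coll_map[OF k unit, of BB v v1]
    by (simp add: coll_swap_def coll_integrand_eq w_def w1_def)
qed

lemma coll_integrand_pair_nonpos:
  fixes f :: "nat \<Rightarrow> 'a::euclidean_space \<Rightarrow> real"
  assumes k: "(m, m1, m') \<in> coll_indices" and unit: "norm \<Omega> = 1"
    and \<gamma>_pos: "\<And>m. 1 \<le> m \<Longrightarrow> \<gamma> m > 0"
    and BB_nonneg: "\<And>e c. 0 \<le> e \<Longrightarrow> -1 \<le> c \<Longrightarrow> c \<le> 1 \<Longrightarrow> BB e c \<ge> 0"
    and f_pos: "\<And>m v. 1 \<le> m \<Longrightarrow> f m v > 0"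
  defines "E \<equiv> coll_integrand BB f (entropy_test \<gamma> f)"
  shows "\<gamma> m * \<gamma> m1 * E (m, m1, m') ((v, v1), \<Omega>)
    + \<gamma> m' * \<gamma> (m + m1 - m') * coll_ratio m m1 m' ^ DIM('a)
        * E (coll_swap (m, m1, m')) (coll_map (m, m1, m') ((v, v1), \<Omega>)) \<le> 0"
proof -
  define q w w1 where "q = m + m1 - m'" and "w = post_v m m1 m' v v1 \<Omega>"
    and "w1 = post_v1 m m1 m' v v1 \<Omega>"
  define \<phi> where "\<phi> = entropy_test \<gamma> f"
  define a b where "a = \<phi> m v + \<phi> m1 v1" and "b = \<phi> m' w + \<phi> q w1"
  define \<rho> where "\<rho> = coll_rate BB m m1 ((v, v1), \<Omega>)"
  define \<mu> where "\<mu> = (real m * real m1) powr (real DIM('a) / 2)"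
  have ge1: "1 \<le> m" "1 \<le> m1" "1 \<le> m'" "1 \<le> q"
    using k by (auto simp: coll_indices_def q_def)
  have "\<gamma> m * \<gamma> m1 * E (m, m1, m') ((v, v1), \<Omega>) = \<rho> * (\<gamma> m * f m v) * (\<gamma> m1 * f m1 v1) * (b - a)"
    by (simp add: E_def coll_integrand_eq \<rho>_def a_def b_def \<phi>_def q_def w_def w1_def)
  also have "\<dots> = \<rho> * \<mu> * exp a * (b - a)"
    using ge1 \<gamma>_pos f_pos by (simp add: mult_eq_exp_entropy_test \<mu>_def a_def \<phi>_def exp_add powr_mult)
  finally have forward: "\<gamma> m * \<gamma> m1 * E (m, m1, m') ((v, v1), \<Omega>) = \<rho> * \<mu> * exp a * (b - a)" .
  have "\<gamma> m' * \<gamma> q * coll_ratio m m1 m' ^ DIM('a)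
        * E (coll_swap (m, m1, m')) (coll_map (m, m1, m') ((v, v1), \<Omega>))
      = \<rho> * coll_ratio m m1 m' ^ DIM('a) * ((\<gamma> m' * f m' w) * (\<gamma> q * f q w1)) * (a - b)"
    using coll_integrand_coll_map[OF k unit, where BB = BB and f = f and \<phi> = \<phi>]
    by (simp add: E_def \<rho>_def a_def b_def \<phi>_def q_def w_def w1_def mult_ac)
  also have "\<dots> = \<rho> * (coll_ratio m m1 m' ^ DIM('a) * (real m' * real q) powr (real DIM('a) / 2))
      * exp b * (a - b)"
    using ge1 \<gamma>_pos f_pos by (simp add: mult_eq_exp_entropy_test b_def \<phi>_def exp_add powr_mult mult_ac)
  also have "\<dots> = \<rho> * \<mu> * exp b * (a - b)"
    by (simp add: coll_ratio_pow[OF k] \<mu>_def q_def)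
  finally have backward: "\<gamma> m' * \<gamma> q * coll_ratio m m1 m' ^ DIM('a)
      * E (coll_swap (m, m1, m')) (coll_map (m, m1, m') ((v, v1), \<Omega>)) = \<rho> * \<mu> * exp b * (a - b)" .
  have "0 \<le> \<rho> * \<mu>"
    using coll_rate_nonneg[OF BB_nonneg unit] by (simp add: \<rho>_def \<mu>_def)
  then have "\<rho> * \<mu> * ((exp a - exp b) * (b - a)) \<le> 0"
    by (rule mult_nonneg_nonpos) (rule exp_diff_mult_nonpos)
  then show ?thesis
    unfolding forward backward[unfolded q_def] by (simp add: algebra_simps)
qed

lemma integrable_coll_integrand:
  "(\<And>i. i < 4 \<Longrightarrow> integrable M (coll_term i BB f \<phi> k)) \<Longrightarrow> integrable M (coll_integrand BB f \<phi> k)"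
  unfolding coll_integrand_def[abs_def] by (intro Bochner_Integration.integrable_diff integrable_add) simp_all

lemma abs_integral_coll_integrand_le:
  assumes "\<And>i. i < 4 \<Longrightarrow> integrable M (coll_term i BB f \<phi> k)"
  shows "\<bar>integral\<^sup>L M (coll_integrand BB f \<phi> k)\<bar>
    \<le> (\<integral>x. \<bar>coll_term 0 BB f \<phi> k x\<bar> \<partial>M) + (\<integral>x. \<bar>coll_term 1 BB f \<phi> k x\<bar> \<partial>M)
      + (\<integral>x. \<bar>coll_term 2 BB f \<phi> k x\<bar> \<partial>M) + (\<integral>x. \<bar>coll_term 3 BB f \<phi> k x\<bar> \<partial>M)"
proof -
  let ?t = "\<lambda>i. coll_term i BB f \<phi> k"
  have "integral\<^sup>L M (coll_integrand BB f \<phi> k)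
      = integral\<^sup>L M (?t 0) + integral\<^sup>L M (?t 1) - integral\<^sup>L M (?t 2) - integral\<^sup>L M (?t 3)"
    unfolding coll_integrand_def[abs_def] using assms[of 0] assms[of 1] assms[of 2] assms[of 3] by simp
  then have "\<bar>integral\<^sup>L M (coll_integrand BB f \<phi> k)\<bar>
      \<le> \<bar>integral\<^sup>L M (?t 0)\<bar> + \<bar>integral\<^sup>L M (?t 1)\<bar> + \<bar>integral\<^sup>L M (?t 2)\<bar> + \<bar>integral\<^sup>L M (?t 3)\<bar>"
    by linarith
  also have "\<dots> \<le> (\<integral>x. \<bar>?t 0 x\<bar> \<partial>M) + (\<integral>x. \<bar>?t 1 x\<bar> \<partial>M) + (\<integral>x. \<bar>?t 2 x\<bar> \<partial>M) + (\<integral>x. \<bar>?t 3 x\<bar> \<partial>M)"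
    by (intro add_mono integral_abs_bound)
  finally show ?thesis .
qed

lemma coll_pair_nonpos:
  fixes A :: "nat \<Rightarrow> nat \<Rightarrow> nat \<Rightarrow> real" and f :: "nat \<Rightarrow> 'a::euclidean_space \<Rightarrow> real"
  assumes k: "(m, m1, m') \<in> coll_indices"
    and A_eq: "\<And>m m1 m'. (m, m1, m') \<in> coll_indices \<Longrightarrow> A m m1 m' = \<gamma> m * \<gamma> m1"
    and \<gamma>_pos: "\<And>m. 1 \<le> m \<Longrightarrow> \<gamma> m > 0"
    and BB_nonneg: "\<And>e c. 0 \<le> e \<Longrightarrow> -1 \<le> c \<Longrightarrow> c \<le> 1 \<Longrightarrow> BB e c \<ge> 0"
    and f_pos: "\<And>m v. 1 \<le> m \<Longrightarrow> f m v > 0"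
    and integrable: "\<And>k. k \<in> coll_indices \<Longrightarrow> integrable coll_space (coll_integrand BB f (entropy_test \<gamma> f) k)"
  defines "E \<equiv> coll_integrand BB f (entropy_test \<gamma> f)"
  shows "A m m1 m' * integral\<^sup>L coll_space (E (m, m1, m'))
       + A m' (m + m1 - m') m * integral\<^sup>L coll_space (E (coll_swap (m, m1, m'))) \<le> 0"
proof -
  define c where "c = coll_ratio m m1 m' ^ DIM('a)"
  have k': "coll_swap (m, m1, m') \<in> coll_indices" "coll_swap (m, m1, m') = (m', m + m1 - m', m)"
    using coll_swap_in_indices[OF k] by (simp_all add: coll_swap_def)
  have int: "integrable coll_space (E (m, m1, m'))" "integrable coll_space (E (coll_swap (m, m1, m')))"
    using integrable k k'(1) by (simp_all add: E_def)
  have int_map: "integrable coll_space (\<lambda>x. E (coll_swap (m, m1, m')) (coll_map (m, m1, m') x))"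
    using int(2) by (rule integrable_coll_map[OF k])
  have swap_int: "integral\<^sup>L coll_space (E (coll_swap (m, m1, m')))
      = c * (\<integral>x. E (coll_swap (m, m1, m')) (coll_map (m, m1, m') x) \<partial>coll_space)"
    using integral_coll_map[OF k int(2)] coll_ratio_pos[OF k] by (simp add: c_def)
  define F where "F x = \<gamma> m * \<gamma> m1 * E (m, m1, m') x
    + \<gamma> m' * \<gamma> (m + m1 - m') * c * E (coll_swap (m, m1, m')) (coll_map (m, m1, m') x)" for x
  have "A m m1 m' * integral\<^sup>L coll_space (E (m, m1, m'))
       + A m' (m + m1 - m') m * integral\<^sup>L coll_space (E (coll_swap (m, m1, m')))
     = integral\<^sup>L coll_space F"
    using int(1) int_map A_eq[OF k] A_eq[OF k'(1)[unfolded k'(2)]]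
    by (simp add: F_def[abs_def] swap_int mult.assoc)
  moreover have "AE x in coll_space. F x \<le> 0"
    using AE_coll_space_norm
  proof (rule eventually_mono)
    fix x :: "('a \<times> 'a) \<times> 'a"
    obtain v v1 \<Omega> where x: "x = ((v, v1), \<Omega>)"
      by (metis prod.collapse)
    assume "norm (snd x) = 1"
    then have "norm \<Omega> = 1"
      by (simp add: x)
    then show "F x \<le> 0"
      unfolding F_def E_def c_def x by (rule coll_integrand_pair_nonpos[OF k _ \<gamma>_pos BB_nonneg f_pos])
  qed
  then have "0 \<le> (\<integral>x. - F x \<partial>coll_space)"
    by (intro integral_nonneg_AE) (auto elim: eventually_mono)
  ultimately show ?thesis
    by simp
qed

lemma infsum_nonpos_bij_betw:
  fixes a :: "'i \<Rightarrow> real"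
  assumes a: "a summable_on I" and \<sigma>: "bij_betw \<sigma> I I" and pair: "\<And>k. k \<in> I \<Longrightarrow> a k + a (\<sigma> k) \<le> 0"
  shows "infsum a I \<le> 0"
proof -
  have a_\<sigma>: "(\<lambda>k. a (\<sigma> k)) summable_on I"
    using summable_on_reindex_bij_betw[OF \<sigma>, of a] a by simp
  have "2 * infsum a I = infsum a I + infsum (\<lambda>k. a (\<sigma> k)) I"
    by (simp add: infsum_reindex_bij_betw[OF \<sigma>])
  also have "\<dots> = infsum (\<lambda>k. a k + a (\<sigma> k)) I"
    by (rule infsum_add[OF a a_\<sigma>, symmetric])
  also have "\<dots> \<le> infsum (\<lambda>_. 0) I"
    by (rule infsum_mono) (simp_all add: summable_on_add[OF a a_\<sigma>] pair)
  finally show ?thesis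
    by simp
qed

lemma summable_on_coll_summands:
  assumes A_nonneg: "\<And>m m1 m'. (m, m1, m') \<in> coll_indices \<Longrightarrow> 0 \<le> A m m1 m'"
    and terms_integrable: "\<And>i k. i < 4 \<Longrightarrow> k \<in> coll_indices \<Longrightarrow>
           integrable coll_space (coll_term i BB f \<phi> k)"
    and terms_summable: "\<And>i. i < 4 \<Longrightarrow>
           (\<lambda>k. (case k of (m, m1, m') \<Rightarrow> A m m1 m') * (\<integral>x. \<bar>coll_term i BB f \<phi> k x\<bar> \<partial>coll_space))
             summable_on coll_indices"
  shows "(\<lambda>k. (case k of (m, m1, m') \<Rightarrow> A m m1 m') * integral\<^sup>L coll_space (coll_integrand BB f \<phi> k))
           summable_on coll_indices"
proof -
  define b where "b i k = (case k of (m, m1, m') \<Rightarrow> A m m1 m') * (\<integral>x. \<bar>coll_term i BB f \<phi> k x\<bar> \<partial>coll_space)"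
    for i k
  have "(\<lambda>k. b 0 k + b 1 k + b 2 k + b 3 k) summable_on coll_indices"
    using terms_summable unfolding b_def by (intro summable_on_add) simp_all
  moreover have "norm ((case k of (m, m1, m') \<Rightarrow> A m m1 m') * integral\<^sup>L coll_space (coll_integrand BB f \<phi> k))
      \<le> b 0 k + b 1 k + b 2 k + b 3 k" if k: "k \<in> coll_indices" for k
  proof -
    have "0 \<le> (case k of (m, m1, m') \<Rightarrow> A m m1 m')"
      using k A_nonneg by (auto split: prod.split)
    with abs_integral_coll_integrand_le[OF terms_integrable[OF _ k]] show ?thesis
      by (simp add: b_def abs_mult distrib_left[symmetric] mult_left_mono)
  qed
  ultimately have "(\<lambda>k. norm ((case k of (m, m1, m') \<Rightarrow> A m m1 m') * integral\<^sup>L coll_space (coll_integrand BB f \<phi> k)))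
      summable_on coll_indices"
    by (rule Infinite_Sum.abs_summable_on_comparison_test')
  then show ?thesis
    by (rule Infinite_Sum.abs_summable_summable)
qed

theorem proposition2p6:
  fixes A :: "nat \<Rightarrow> nat \<Rightarrow> nat \<Rightarrow> real"
    and BB :: "real \<Rightarrow> real \<Rightarrow> real"
    and \<gamma> :: "nat \<Rightarrow> real"
    and f :: "nat \<Rightarrow> 'a::euclidean_space \<Rightarrow> real"
  assumes A_eq: "\<And>m m1 m'. 1 \<le> m \<Longrightarrow> 1 \<le> m1 \<Longrightarrow> 1 \<le> m' \<Longrightarrow> m' \<le> m + m1 - 1
                   \<Longrightarrow> A m m1 m' = \<gamma> m * \<gamma> m1"
    and \<gamma>_pos: "\<And>m. 1 \<le> m \<Longrightarrow> \<gamma> m > 0"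
    and BB_nonneg: "\<And>e c. 0 \<le> e \<Longrightarrow> -1 \<le> c \<Longrightarrow> c \<le> 1 \<Longrightarrow> BB e c \<ge> 0"
    and BB_meas: "case_prod BB \<in> borel_measurable borel"
    and f_pos: "\<And>m v. 1 \<le> m \<Longrightarrow> f m v > 0"
    and f_meas: "\<And>m. 1 \<le> m \<Longrightarrow> f m \<in> borel_measurable borel"
    and terms_integrable: "\<And>i k. i < 4 \<Longrightarrow> k \<in> coll_indices \<Longrightarrow>
           integrable coll_space (coll_term i BB f (entropy_test \<gamma> f) k)"
    and terms_summable: "\<And>i. i < 4 \<Longrightarrow>
           (\<lambda>k. (case k of (m, m1, m') \<Rightarrow> A m m1 m') *
                 (\<integral>x. \<bar>coll_term i BB f (entropy_test \<gamma> f) k x\<bar> \<partial>coll_space))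
             summable_on coll_indices"
  shows "BME_pairing A BB f (entropy_test \<gamma> f) \<le> 0"
proof -
  define a where "a = (\<lambda>k. (case k of (m, m1, m') \<Rightarrow> A m m1 m')
    * integral\<^sup>L coll_space (coll_integrand BB f (entropy_test \<gamma> f) k))"
  have A_eq': "A m m1 m' = \<gamma> m * \<gamma> m1" if "(m, m1, m') \<in> coll_indices" for m m1 m'
    using that A_eq by (simp add: coll_indices_def)
  have "a summable_on coll_indices"
    unfolding a_def
    using A_eq' \<gamma>_pos terms_integrable terms_summable
    by (intro summable_on_coll_summands) (auto simp: coll_indices_def less_imp_le)
  moreover have "a k + a (coll_swap k) \<le> 0" if k: "k \<in> coll_indices" for k
  proof -
    obtain m m1 m' where k_eq: "k = (m, m1, m')"
      by (rule prod_cases3)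
    from k show ?thesis
      using coll_pair_nonpos[OF k[unfolded k_eq] A_eq' \<gamma>_pos BB_nonneg f_pos
          integrable_coll_integrand[OF terms_integrable]]
      by (simp add: a_def k_eq coll_swap_def)
  qed
  ultimately have "infsum a coll_indices \<le> 0"
    by (rule infsum_nonpos_bij_betw[OF _ bij_betw_coll_swap])
  then show ?thesis
    by (simp add: BME_pairing_def a_def)
qed

end
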